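(* Let $k\ge2$, $\sigma_i=\frac{i(k-i)}2$, and let $\boldsymbol\xi(\tau)=(\xi_1,\dots,\xi_k)(\tau)$, $\tau\in[0,\tau_\infty)$, be a solution of the system $\dot\xi_i=b_i-b_{i+1}$ ($i=1,\dots,k$), where $b_1=b_{k+1}=0$ and $b_i=\sigma_{i-1}(e^{-(\xi_i-\xi_{i-1})}-1)$ for $i=2,\dots,k$, with $\sum_{i=1}^k\xi_i(0)=0$ and $\boldsymbol\xi(\tau)\ne0$ for all $\tau\in[0,\tau_\infty)$. Let $B(\tau)=\max_{1\le i\le k+1}b_i(\tau)$ and $J(\tau)=\{i\in\{1,\dots,k+1\}: b_i(\tau)=B(\tau)\}$. Then for every $\tau_0\in[0,\tau_\infty)$ there exists $\varepsilon>0$ such that for all $i\in J(\tau_0)\cap\{2,\dots,k\}$ and all $t\in(\tau_0,\tau_0+\varepsilon)$, $b_i(t)<B(\tau_0)$. *)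

theory Defs
  imports "HOL-Analysis.Analysis"
begin

definition sigma :: "nat \<Rightarrow> nat \<Rightarrow> real" where
  "sigma k i = real i * (real k - real i) / 2"

definition bfun :: "nat \<Rightarrow> (real \<Rightarrow> nat \<Rightarrow> real) \<Rightarrow> real \<Rightarrow> nat \<Rightarrow> real" where
  "bfun k xi t i = (if 2 \<le> i \<and> i \<le> k
      then sigma k (i - 1) * (exp (- (xi t i - xi t (i - 1))) - 1) else 0)"

definition Bmax :: "nat \<Rightarrow> (real \<Rightarrow> nat \<Rightarrow> real) \<Rightarrow> real \<Rightarrow> real" where
  "Bmax k xi t = Max ((\<lambda>i. bfun k xi t i) ` {1..k+1})"

definition Jset :: "nat \<Rightarrow> (real \<Rightarrow> nat \<Rightarrow> real) \<Rightarrow> real \<Rightarrow> nat set" where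
  "Jset k xi t = {i \<in> {1..k+1}. bfun k xi t i = Bmax k xi t}"

end

theory Submission
  imports Defs
begin

text \<open>Along the flow every interior \<open>b_i\<close> satisfies
  \<open>b_i' = -(b_i + \<sigma>_(i-1)) (2 b_i - b_(i-1) - b_(i+1))\<close> with \<open>b_i + \<sigma>_(i-1) > 0\<close>, so a maximal
  interior \<open>b_i\<close> cannot increase; as \<open>b_1 = b_(k+1) = 0 \<le> B(\<tau>0)\<close>, this yields the weak maximum
  principle \<open>b_j(t) \<le> B(\<tau>0)\<close> for \<open>t \<ge> \<tau>0\<close>. If an interior \<open>b_i(t)\<close> with \<open>t > \<tau>0\<close> reached
  \<open>B(\<tau>0)\<close>, its left derivative would be \<open>\<ge> 0\<close>, forcing both neighbours to the value \<open>B(\<tau>0)\<close>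
  as well. Spreading to the boundary gives \<open>B(\<tau>0) = 0\<close> and all \<open>b_j(t) = 0\<close>, i.e. all \<open>\<xi>_j(t)\<close>
  are equal; since \<open>\<Sum> \<xi>_j\<close> is conserved and vanishes initially, \<open>\<xi>(t) = 0\<close>, which is excluded.
  So the strict inequality holds for every \<open>\<epsilon>\<close> and every interior index, not only for those
  in \<open>J(\<tau>0)\<close>.\<close>

lemma has_real_derivative_nonneg_at_left_max:
  fixes f :: "real \<Rightarrow> real"
  assumes deriv: "(f has_real_derivative D) (at x within {a..x})" and "a < x"
    and le: "\<And>y. a \<le> y \<Longrightarrow> y < x \<Longrightarrow> f y \<le> f x"
  shows "0 \<le> D"
proof -
  from deriv have "((\<lambda>y. (f y - f x) / (y - x)) \<longlongrightarrow> D) (at_left x)"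
    using at_within_Icc_at_left[OF \<open>a < x\<close>] by (simp add: has_field_derivative_iff)
  moreover have "\<forall>\<^sub>F y in at_left x. 0 \<le> (f y - f x) / (y - x)"
    using eventually_at_left_real[OF \<open>a < x\<close>]
    by (rule eventually_mono) (use le in \<open>auto intro: divide_nonpos_neg\<close>)
  ultimately show ?thesis
    by (rule tendsto_lowerbound) (simp add: trivial_limit_at_left_real)
qed

lemma continuous_on_le_at_right_end:
  fixes f :: "real \<Rightarrow> real"
  assumes "continuous_on {a..x} f" and "a < x"
    and le: "\<And>y. a \<le> y \<Longrightarrow> y < x \<Longrightarrow> f y \<le> C"
  shows "f x \<le> C"
proof -
  have "continuous (at x within {a..x}) f"
    using assms(1,2) by (simp add: continuous_on_eq_continuous_within)
  then have "(f \<longlongrightarrow> f x) (at_left x)"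
    using at_within_Icc_at_left[OF \<open>a < x\<close>] by (simp add: continuous_within)
  moreover have "\<forall>\<^sub>F y in at_left x. f y \<le> C"
    using eventually_at_left_real[OF \<open>a < x\<close>] by (rule eventually_mono) (use le in auto)
  ultimately show ?thesis
    by (rule tendsto_upperbound) (simp add: trivial_limit_at_left_real)
qed

text \<open>Against the tilted barrier \<open>B + d (1 + s - a)\<close> the first touching time is a strict crossing,
  so the touching function would have derivative at least \<open>d > 0\<close> there.\<close>

lemma finite_max_principle_perturbed:
  fixes f :: "'j \<Rightarrow> real \<Rightarrow> real"
  assumes "finite J"
    and cont: "\<And>j. j \<in> J \<Longrightarrow> continuous_on {a..c} (f j)"
    and init: "\<And>j. j \<in> J \<Longrightarrow> f j a \<le> B"
    and deriv: "\<And>j s. j \<in> J \<Longrightarrow> s \<in> {a<..c} \<Longrightarrow> B < f j s \<Longrightarrow> (\<forall>l\<in>J. f l s \<le> f j s) \<Longrightarrow>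
      \<exists>D\<le>0. (f j has_real_derivative D) (at s within {a..c})"
    and "0 < d" and "j \<in> J" and "s \<in> {a..c}"
  shows "f j s < B + d * (1 + s - a)"
proof (rule ccontr)
  define g where "g s = B + d * (1 + s - a)" for s
  define S where "S = (\<Union>j\<in>J. {s \<in> {a..c}. g s \<le> f j s})"
  assume "\<not> f j s < B + d * (1 + s - a)"
  then have "s \<in> S" using \<open>j \<in> J\<close> \<open>s \<in> {a..c}\<close> unfolding S_def g_def by force
  moreover have "compact S"
    unfolding compact_eq_bounded_closed
  proof
    show "bounded S" by (rule bounded_subset[of "{a..c}"]) (auto simp: S_def)
    show "closed S" unfolding S_def using \<open>finite J\<close>
      by (intro closed_UN ballI continuous_on_closed_Collect_le cont)
         (auto simp: g_def intro!: continuous_intros)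
  qed
  ultimately obtain t where "t \<in> S" and first: "\<forall>y\<in>S. t \<le> y"
    using compact_attains_inf by (metis empty_iff)
  then obtain i where "i \<in> J" "t \<in> {a..c}" and touch: "g t \<le> f i t"
    unfolding S_def by blast
  have "a < t"
    using init[OF \<open>i \<in> J\<close>] touch \<open>0 < d\<close> \<open>t \<in> {a..c}\<close> by (cases "t = a") (auto simp: g_def)
  have below: "f l y < g y" if "l \<in> J" "a \<le> y" "y < t" for l y
    using first that \<open>t \<in> {a..c}\<close> unfolding S_def by force
  have le_g: "f l t \<le> g t" if "l \<in> J" for l
  proof -
    have "continuous_on {a..t} (\<lambda>y. f l y - g y)" unfolding g_def
      using \<open>t \<in> {a..c}\<close> by (intro continuous_intros continuous_on_subset[OF cont[OF that]]) auto
    then have "f l t - g t \<le> 0"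
      by (rule continuous_on_le_at_right_end[OF _ \<open>a < t\<close>]) (simp add: below[OF that] less_imp_le)
    then show ?thesis by simp
  qed
  have "f i t = g t" using le_g[OF \<open>i \<in> J\<close>] touch by linarith
  have top: "\<forall>l\<in>J. f l t \<le> f i t" using le_g \<open>f i t = g t\<close> by simp
  have "B < f i t" using \<open>f i t = g t\<close> \<open>0 < d\<close> \<open>a < t\<close> by (simp add: g_def)
  then obtain D where "D \<le> 0" and "(f i has_real_derivative D) (at t within {a..c})"
    using deriv[OF \<open>i \<in> J\<close> _ _ top] \<open>a < t\<close> \<open>t \<in> {a..c}\<close> by auto
  then have "((\<lambda>y. f i y - g y) has_real_derivative D - d) (at t within {a..t})"
    using \<open>t \<in> {a..c}\<close> unfolding g_def
    by (auto intro!: derivative_eq_intros intro: has_field_derivative_subset)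
  then have "0 \<le> D - d"
    by (rule has_real_derivative_nonneg_at_left_max[OF _ \<open>a < t\<close>])
       (simp add: below[OF \<open>i \<in> J\<close>] \<open>f i t = g t\<close> less_imp_le)
  then show False using \<open>D \<le> 0\<close> \<open>0 < d\<close> by simp
qed

lemma finite_max_principle:
  fixes f :: "'j \<Rightarrow> real \<Rightarrow> real"
  assumes "finite J"
    and "\<And>j. j \<in> J \<Longrightarrow> continuous_on {a..c} (f j)"
    and "\<And>j. j \<in> J \<Longrightarrow> f j a \<le> B"
    and "\<And>j s. j \<in> J \<Longrightarrow> s \<in> {a<..c} \<Longrightarrow> B < f j s \<Longrightarrow> (\<forall>l\<in>J. f l s \<le> f j s) \<Longrightarrow>
      \<exists>D\<le>0. (f j has_real_derivative D) (at s within {a..c})"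
    and "j \<in> J" and "s \<in> {a..c}"
  shows "f j s \<le> B"
proof (rule field_le_epsilon)
  fix e :: real assume "0 < e"
  have pos: "0 < 1 + s - a" using \<open>s \<in> {a..c}\<close> by simp
  then have "0 < e / (1 + s - a)" using \<open>0 < e\<close> by simp
  from finite_max_principle_perturbed[OF assms(1-4) this assms(5,6)]
  have "f j s < B + e / (1 + s - a) * (1 + s - a)" .
  with pos show "f j s \<le> B + e" by simp
qed

lemma propagate_between:
  fixes P :: "nat \<Rightarrow> bool"
  assumes step: "\<And>i. l < i \<Longrightarrow> i < r \<Longrightarrow> P i \<Longrightarrow> P (i - 1) \<and> P (i + 1)"
    and "l < i" "i < r" "P i" and "l \<le> j" "j \<le> r"
  shows "P j"
proof -
  have down: "P (i - m)" if "m \<le> i - l" for m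
    using that
  proof (induction m)
    case (Suc m)
    then have "P (i - m - 1)" using step[of "i - m"] \<open>i < r\<close> by simp
    then show ?case by (simp add: diff_Suc)
  qed (use \<open>P i\<close> in simp)
  have up: "P (i + m)" if "i + m \<le> r" for m
    using that
  proof (induction m)
    case (Suc m)
    then show ?case using step[of "i + m"] \<open>l < i\<close> by simp
  qed (use \<open>P i\<close> in simp)
  show ?thesis
  proof (cases "j \<le> i")
    case True
    then show ?thesis using down[of "i - j"] \<open>l \<le> j\<close> by simp
  next
    case False
    then show ?thesis using up[of "j - i"] \<open>j \<le> r\<close> by simp
  qed
qed

lemma sigma_pos: "0 < i \<Longrightarrow> i < k \<Longrightarrow> 0 < sigma k i"
  unfolding sigma_def by simp

lemma bfun_1 [simp]: "bfun k xi t 1 = 0" "bfun k xi t (Suc 0) = 0"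
  and bfun_Suc [simp]: "bfun k xi t (Suc k) = 0"
  unfolding bfun_def by auto

lemma bfun_plus_sigma:
  "i \<in> {2..k} \<Longrightarrow> bfun k xi t i + sigma k (i - 1) = sigma k (i - 1) * exp (xi t (i - 1) - xi t i)"
  unfolding bfun_def by (simp add: algebra_simps)

lemma sigma_pred_pos: "i \<in> {2..k} \<Longrightarrow> 0 < sigma k (i - 1)"
  by (rule sigma_pos) auto

lemma bfun_plus_sigma_pos:
  assumes "i \<in> {2..k}" shows "0 < bfun k xi t i + sigma k (i - 1)"
  using bfun_plus_sigma[OF assms] sigma_pred_pos[OF assms] by simp

lemma bfun_eq_0_iff: "i \<in> {2..k} \<Longrightarrow> bfun k xi t i = 0 \<longleftrightarrow> xi t i = xi t (i - 1)"
  using sigma_pred_pos[of i k] unfolding bfun_def by auto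

lemma bfun_le_Bmax: "j \<in> {1..k+1} \<Longrightarrow> bfun k xi t j \<le> Bmax k xi t"
  unfolding Bmax_def by simp

lemma Bmax_nonneg: "0 \<le> Bmax k xi t"
proof -
  have "bfun k xi t 1 \<le> Bmax k xi t" by (rule bfun_le_Bmax) simp
  then show ?thesis by (simp only: bfun_1)
qed

lemma xi_eq_first_if_bfun_0:
  assumes "\<And>j. j \<in> {2..k} \<Longrightarrow> bfun k xi t j = 0" and "i \<in> {1..k}"
  shows "xi t i = xi t 1"
  using assms(2)
proof (induction i)
  case (Suc i)
  show ?case
  proof (cases "i = 0")
    case False
    then have "xi t (Suc i) = xi t i" using assms(1)[of "Suc i"] Suc.prems bfun_eq_0_iff[of "Suc i" k]
      by simp
    then show ?thesis using Suc False by simp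
  qed simp
qed simp

locale xi_flow =
  fixes k :: nat and xi :: "real \<Rightarrow> nat \<Rightarrow> real" and a c :: real
  assumes xi_has_derivative: "\<And>t i. t \<in> {a..c} \<Longrightarrow> i \<in> {1..k} \<Longrightarrow>
    ((\<lambda>s. xi s i) has_real_derivative bfun k xi t i - bfun k xi t (i + 1)) (at t within {a..c})"
begin

lemma restrict:
  assumes "a \<le> a'" and "c' \<le> c"
  shows "xi_flow k xi a' c'"
proof
  fix t i assume "t \<in> {a'..c'}" and "i \<in> {1..k}"
  with assms show "((\<lambda>s. xi s i) has_real_derivative bfun k xi t i - bfun k xi t (i + 1))
    (at t within {a'..c'})"
    by (intro has_field_derivative_subset[OF xi_has_derivative]) auto
qed

lemma xi_continuous_on: "i \<in> {1..k} \<Longrightarrow> continuous_on {a..c} (\<lambda>s. xi s i)"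
  by (rule DERIV_continuous_on) (rule xi_has_derivative)

lemma bfun_continuous_on: "continuous_on {a..c} (\<lambda>s. bfun k xi s i)"
proof (cases "i \<in> {2..k}")
  case True
  then have "continuous_on {a..c} (\<lambda>s. xi s i)" "continuous_on {a..c} (\<lambda>s. xi s (i - 1))"
    by (auto intro!: xi_continuous_on)
  with True show ?thesis unfolding bfun_def by (auto intro!: continuous_intros)
next
  case False
  then have "(\<lambda>s. bfun k xi s i) = (\<lambda>s. 0)" by (auto simp: bfun_def)
  then show ?thesis using continuous_on_const by metis
qed

lemma bfun_has_derivative:
  assumes "i \<in> {2..k}" and "t \<in> {a..c}"
  shows "((\<lambda>s. bfun k xi s i) has_real_derivative
    - (bfun k xi t i + sigma k (i - 1)) * (2 * bfun k xi t i - bfun k xi t (i - 1) - bfun k xi t (i + 1)))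
    (at t within {a..c})"
proof -
  have "i - 1 \<in> {1..k}" and "i - 1 + 1 = i" using assms(1) by auto
  then have prev: "((\<lambda>s. xi s (i - 1)) has_real_derivative bfun k xi t (i - 1) - bfun k xi t i)
    (at t within {a..c})"
    using xi_has_derivative[OF assms(2), of "i - 1"] by simp
  have cur: "((\<lambda>s. xi s i) has_real_derivative bfun k xi t i - bfun k xi t (i + 1))
    (at t within {a..c})"
    using xi_has_derivative[OF assms(2), of i] assms(1) by simp
  have "(\<lambda>s. bfun k xi s i) = (\<lambda>s. sigma k (i - 1) * (exp (xi s (i - 1) - xi s i) - 1))"
    using assms(1) unfolding bfun_def by auto
  then have "((\<lambda>s. bfun k xi s i) has_real_derivative
      sigma k (i - 1) * exp (xi t (i - 1) - xi t i)
      * ((bfun k xi t (i - 1) - bfun k xi t i) - (bfun k xi t i - bfun k xi t (i + 1))))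
    (at t within {a..c})"
    by (simp only:) (rule derivative_eq_intros prev cur | simp)+
  then show ?thesis
    unfolding bfun_plus_sigma[OF assms(1), symmetric] by (simp add: algebra_simps)
qed

lemma sum_xi_constant:
  assumes "t \<in> {a..c}"
  shows "(\<Sum>i=1..k. xi t i) = (\<Sum>i=1..k. xi a i)"
proof -
  have zero_deriv: "((\<lambda>s. \<Sum>i=1..k. xi s i) has_real_derivative 0) (at s within {a..c})"
    if "s \<in> {a..c}" for s
  proof -
    have "(\<Sum>i=1..k. bfun k xi s i - bfun k xi s (i + 1)) = - (\<Sum>i=1..k. bfun k xi s (Suc i) - bfun k xi s i)"
      by (simp add: sum_negf[symmetric])
    also have "\<dots> = 0" by (subst sum_Suc_diff) simp_all
    finally have "(\<Sum>i=1..k. bfun k xi s i - bfun k xi s (i + 1)) = 0" .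
    moreover have "((\<lambda>s. \<Sum>i=1..k. xi s i) has_real_derivative
        (\<Sum>i=1..k. bfun k xi s i - bfun k xi s (i + 1))) (at s within {a..c})"
      by (rule DERIV_sum) (rule xi_has_derivative[OF that])
    ultimately show ?thesis by simp
  qed
  have "\<exists>C. \<forall>s\<in>{a..c}. (\<Sum>i=1..k. xi s i) = C"
    by (rule has_field_derivative_zero_constant[OF convex_real_interval(5)]) (rule zero_deriv)
  then obtain C where "\<forall>s\<in>{a..c}. (\<Sum>i=1..k. xi s i) = C" ..
  moreover have "a \<in> {a..c}" using assms by simp
  ultimately show ?thesis using assms by simp
qed

lemma bfun_le_Bmax_initial:
  assumes "t \<in> {a..c}" and "j \<in> {1..k+1}"
  shows "bfun k xi t j \<le> Bmax k xi a"
proof -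
  have deriv: "\<exists>D\<le>0. ((\<lambda>s. bfun k xi s j) has_real_derivative D) (at s within {a..c})"
    if j: "j \<in> {1..k+1}" and "s \<in> {a<..c}" and above: "Bmax k xi a < bfun k xi s j"
      and top: "\<forall>l\<in>{1..k+1}. bfun k xi s l \<le> bfun k xi s j" for j s
  proof -
    have "j \<noteq> 1" "j \<noteq> k + 1" using above Bmax_nonneg[of k xi a] by auto
    with j have j': "j \<in> {2..k}" by auto
    then have "j - 1 \<in> {1..k+1}" and "j + 1 \<in> {1..k+1}" by auto
    then have "bfun k xi s (j - 1) \<le> bfun k xi s j" and "bfun k xi s (j + 1) \<le> bfun k xi s j"
      using top by blast+
    then have "- (bfun k xi s j + sigma k (j - 1))
        * (2 * bfun k xi s j - bfun k xi s (j - 1) - bfun k xi s (j + 1)) \<le> 0"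
      using bfun_plus_sigma_pos[OF j', of xi s] by (intro mult_nonpos_nonneg) linarith+
    moreover have "s \<in> {a..c}" using \<open>s \<in> {a<..c}\<close> by simp
    ultimately show ?thesis using bfun_has_derivative[OF j'] by blast
  qed
  show ?thesis
    by (rule finite_max_principle[where f = "\<lambda>j s. bfun k xi s j", OF _ bfun_continuous_on
          bfun_le_Bmax deriv assms(2,1)]) simp
qed

lemma bfun_neighbours_eq_Bmax_initial:
  assumes "a < c" and i: "i \<in> {2..k}" and top: "bfun k xi c i = Bmax k xi a"
  shows "bfun k xi c (i - 1) = Bmax k xi a \<and> bfun k xi c (i + 1) = Bmax k xi a"
proof -
  have "0 \<le> - (bfun k xi c i + sigma k (i - 1))
      * (2 * bfun k xi c i - bfun k xi c (i - 1) - bfun k xi c (i + 1))"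
  proof (rule has_real_derivative_nonneg_at_left_max[OF bfun_has_derivative[OF i] \<open>a < c\<close>])
    fix y assume "a \<le> y" "y < c"
    then show "bfun k xi y i \<le> bfun k xi c i"
      using bfun_le_Bmax_initial[of y i] i top by simp
  qed (use \<open>a < c\<close> in auto)
  then have "2 * bfun k xi c i - bfun k xi c (i - 1) - bfun k xi c (i + 1) \<le> 0"
    using bfun_plus_sigma_pos[OF i, of xi c] by (simp add: zero_le_mult_iff)
  moreover have "c \<in> {a..c}" and "i - 1 \<in> {1..k+1}" and "i + 1 \<in> {1..k+1}"
    using \<open>a < c\<close> i by auto
  ultimately show ?thesis
    using bfun_le_Bmax_initial[of c "i - 1"] bfun_le_Bmax_initial[of c "i + 1"] top by linarith
qed

lemma bfun_lt_earlier_Bmax: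
  assumes sum_0: "(\<Sum>i=1..k. xi a i) = 0" and nonzero: "\<exists>i\<in>{1..k}. xi c i \<noteq> 0"
    and "a \<le> s" "s < c" and i: "i \<in> {2..k}"
  shows "bfun k xi c i < Bmax k xi s"
proof (rule ccontr)
  interpret late: xi_flow k xi s c by (rule restrict) (use \<open>a \<le> s\<close> in simp_all)
  assume "\<not> ?thesis"
  moreover have "bfun k xi c i \<le> Bmax k xi s"
    by (rule late.bfun_le_Bmax_initial) (use i \<open>s < c\<close> in auto)
  ultimately have "bfun k xi c i = Bmax k xi s" by linarith
  moreover have "bfun k xi c (j - 1) = Bmax k xi s \<and> bfun k xi c (j + 1) = Bmax k xi s"
    if "1 < j" "j < k + 1" "bfun k xi c j = Bmax k xi s" for j
    by (rule late.bfun_neighbours_eq_Bmax_initial[OF \<open>s < c\<close> _ that(3)]) (use that in auto)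
  ultimately have max: "bfun k xi c j = Bmax k xi s" if "j \<in> {1..k+1}" for j
    using propagate_between[where P = "\<lambda>j. bfun k xi c j = Bmax k xi s" and l = 1 and r = "k + 1"
        and i = i and j = j] i that
    by simp
  have "Bmax k xi s = 0" using max[of 1] by simp
  then have "bfun k xi c j = 0" if "j \<in> {2..k}" for j
    using max[of j] that by simp
  then have const: "xi c j = xi c 1" if "j \<in> {1..k}" for j
    using xi_eq_first_if_bfun_0[OF _ that] by blast
  have "(\<Sum>j=1..k. xi c j) = (\<Sum>j=1..k. xi c 1)" by (rule sum.cong[OF refl const])
  then have "(\<Sum>j=1..k. xi c j) = k * xi c 1" by simp
  moreover have "(\<Sum>j=1..k. xi c j) = 0"
    using sum_xi_constant[of c] sum_0 \<open>a \<le> s\<close> \<open>s < c\<close> by simp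
  ultimately have "xi c 1 = 0" using i by simp
  moreover obtain j where "j \<in> {1..k}" and "xi c j \<noteq> 0" using nonzero ..
  ultimately show False using const[of j] by simp
qed

end

theorem lemma2p2:
  fixes k :: nat and xi :: "real \<Rightarrow> nat \<Rightarrow> real" and tau_inf :: ereal
  assumes "k \<ge> 2"
    and ode: "\<And>t i. 0 \<le> t \<Longrightarrow> ereal t < tau_inf \<Longrightarrow> i \<in> {1..k} \<Longrightarrow>
      ((\<lambda>s. xi s i) has_real_derivative (bfun k xi t i - bfun k xi t (i + 1)))
        (at t within {s. 0 \<le> s \<and> ereal s < tau_inf})"
    and init: "(\<Sum>i=1..k. xi 0 i) = 0"
    and nonzero: "\<And>t. 0 \<le> t \<Longrightarrow> ereal t < tau_inf \<Longrightarrow> (\<exists>i\<in>{1..k}. xi t i \<noteq> 0)"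
  shows "\<forall>tau0. 0 \<le> tau0 \<and> ereal tau0 < tau_inf \<longrightarrow>
    (\<exists>\<epsilon>>0. \<forall>i \<in> Jset k xi tau0 \<inter> {2..k}. \<forall>t. tau0 < t \<and> t < tau0 + \<epsilon> \<and> ereal t < tau_inf \<longrightarrow>
        bfun k xi t i < Bmax k xi tau0)"
proof (intro allI impI)
  \<comment> \<open>\<open>k \<ge> 2\<close> is not needed: an index in \<open>{2..k}\<close> already forces it.\<close>
  fix tau0 assume tau0: "0 \<le> tau0 \<and> ereal tau0 < tau_inf"
  have "bfun k xi t i < Bmax k xi tau0" if i: "i \<in> {2..k}" and "tau0 < t" "ereal t < tau_inf" for i t
  proof -
    have "{0..t} \<subseteq> {s. 0 \<le> s \<and> ereal s < tau_inf}"
      using \<open>ereal t < tau_inf\<close> by auto (meson ereal_less_eq(3) le_less_trans)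
    then interpret xi_flow k xi 0 t
      by unfold_locales (rule has_field_derivative_subset[OF ode]; auto)
    show ?thesis
      by (rule bfun_lt_earlier_Bmax[OF init nonzero _ _ i])
         (use tau0 \<open>tau0 < t\<close> \<open>ereal t < tau_inf\<close> in auto)
  qed
  then show "\<exists>\<epsilon>>0. \<forall>i \<in> Jset k xi tau0 \<inter> {2..k}. \<forall>t. tau0 < t \<and> t < tau0 + \<epsilon> \<and> ereal t < tau_inf \<longrightarrow>
      bfun k xi t i < Bmax k xi tau0"
    by (intro exI[of _ 1]) auto
qed

end
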